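(* Let $d\ge2$ and let $A$ be the adjacency matrix of a tournament of Type (3) with $n=2d$ vertices whose Seidel matrix $S$ has spectrum $\{(-\theta)^1,(-\phi)^{d-1},\phi^{d-1},\theta^1\}$ with $0<\phi<\theta$ (exponents denote multiplicities). Then $d$ is odd and $S^2$ is permutationally similar to \[\begin{pmatrix}kI+lJ&0\\0&kI+lJ\end{pmatrix}\] (blocks of size $d$) for some positive integers $k,l$.
   Context: A tournament on vertex set $V$ is an orientation of the complete graph on $V$; its adjacency matrix $A$ has $A_{xy}=1$ if $x\to y$ and $0$ otherwise, and its Seidel matrix is $S=\sqrt{-1}(A-A^T)$. Let $\tau_1<\cdots<\tau_s$ be the distinct eigenvalues of $S$ with multiplicities $m_i$, and main angles $\beta_i=\frac1{\sqrt n}\|E_ij\|$, where $E_i$ is the orthogonal projection onto the $\tau_i$-eigenspace and $j$ the all-ones vector. The tournament is of Type (1) if $\beta_1=0$; of Type (2) if $\beta_1\neq0$ and $m_1>1$; of Type (3) if $m_1=1$, $\beta_2=0$ and $c_2<0$, where $c_2=n\beta_1^2/(\tau_1-\tau_2)+\sum_{i=3}^s n\beta_i^2/(\tau_i-\tau_2)$; and of Type (4) otherwise. $I$ and $J$ are the identity and all-ones matrices; two matrices $M,N$ are permutationally similar if $N=PMP^T$ for a permutation matrix $P$. *)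

theory Defs
  imports "Jordan_Normal_Form.Determinant" "Jordan_Normal_Form.Char_Poly"
begin

definition tournament_adj :: "nat \<Rightarrow> int mat \<Rightarrow> bool" where
  "tournament_adj n A \<longleftrightarrow> A \<in> carrier_mat n n \<and>
     (\<forall>x<n. A $$ (x,x) = 0) \<and>
     (\<forall>x<n. \<forall>y<n. x \<noteq> y \<longrightarrow>
        (A $$ (x,y) = 1 \<and> A $$ (y,x) = 0) \<or> (A $$ (x,y) = 0 \<and> A $$ (y,x) = 1))"

definition seidel :: "int mat \<Rightarrow> complex mat" where
  "seidel A = \<i> \<cdot>\<^sub>m map_mat complex_of_int (A - transpose_mat A)"

(* distinct eigenvalues tau_1 < ... < tau_s (0-indexed list); S is Hermitian so all are real *)
definition distinct_eigs :: "complex mat \<Rightarrow> real list" where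
  "distinct_eigs S = sorted_list_of_set {t::real. eigenvalue S (complex_of_real t)}"

definition eig_mult :: "complex mat \<Rightarrow> real \<Rightarrow> nat" where
  "eig_mult S t = order (complex_of_real t) (char_poly S)"

definition cinner :: "complex vec \<Rightarrow> complex vec \<Rightarrow> complex" where
  "cinner u v = (\<Sum>k<dim_vec u. u $ k * cnj (v $ k))"

definition eigenspace :: "complex mat \<Rightarrow> real \<Rightarrow> complex vec set" where
  "eigenspace S t = {v \<in> carrier_vec (dim_row S). S *\<^sub>v v = complex_of_real t \<cdot>\<^sub>v v}"

definition eig_proj :: "complex mat \<Rightarrow> real \<Rightarrow> complex vec \<Rightarrow> complex vec" where
  "eig_proj S t x = (THE w. w \<in> eigenspace S t \<and> (\<forall>u\<in>eigenspace S t. cinner (x - w) u = 0))"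

definition cnorm :: "complex vec \<Rightarrow> real" where
  "cnorm v = sqrt (\<Sum>k<dim_vec v. (cmod (v $ k))\<^sup>2)"

definition main_angle :: "complex mat \<Rightarrow> real \<Rightarrow> real" where
  "main_angle S t = cnorm (eig_proj S t (vec (dim_row S) (\<lambda>_. 1))) / sqrt (real (dim_row S))"

(* Type (3), with 0-based indices: tau_1 = \<tau>!0, tau_2 = \<tau>!1 *)
definition type3 :: "nat \<Rightarrow> int mat \<Rightarrow> bool" where
  "type3 n A \<longleftrightarrow> tournament_adj n A \<and>
     (let S = seidel A; \<tau> = distinct_eigs S; s = length \<tau>; \<beta> = (\<lambda>i. main_angle S (\<tau> ! i));
          c2 = real n * (\<beta> 0)\<^sup>2 / (\<tau>!0 - \<tau>!1)
               + (\<Sum>i\<in>{2..<s}. real n * (\<beta> i)\<^sup>2 / (\<tau>!i - \<tau>!1))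
      in s \<ge> 2 \<and> eig_mult S (\<tau>!0) = 1 \<and> \<beta> 1 = 0 \<and> c2 < 0)"

definition perm_mat :: "nat \<Rightarrow> (nat \<Rightarrow> nat) \<Rightarrow> 'a::{zero,one} mat" where
  "perm_mat n p = mat n n (\<lambda>(i,j). if p i = j then 1 else 0)"

definition perm_similar :: "nat \<Rightarrow> 'a::comm_ring_1 mat \<Rightarrow> 'a mat \<Rightarrow> bool" where
  "perm_similar n M N \<longleftrightarrow> (\<exists>p. p permutes {..<n} \<and>
      N = perm_mat n p * M * transpose_mat (perm_mat n p))"

(* block matrix diag(kI+lJ, kI+lJ) with blocks of size d *)
definition block_kIlJ :: "nat \<Rightarrow> 'a::comm_ring_1 \<Rightarrow> 'a \<Rightarrow> 'a mat" where
  "block_kIlJ d k l = mat (2*d) (2*d)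
     (\<lambda>(i,j). if (i < d) = (j < d) then (if i = j then k else 0) + l else 0)"

end

theory Submission
  imports Defs "Jordan_Normal_Form.Schur_Decomposition"
begin

text \<open>
  Write \<open>S = \<i> T\<close> with \<open>T = A - A\<^sup>T\<close>, a skew matrix with entries \<open>\<plusminus>1\<close> off the diagonal,
  so that \<open>S\<^sup>2 = T T\<^sup>T\<close> is a real symmetric matrix with diagonal \<open>n - 1\<close>. A Schur
  decomposition of \<open>S\<close> turns the characteristic polynomial into
  \<open>(S\<^sup>2 - \<phi>\<^sup>2)^(d - 1) (S\<^sup>2 - \<theta>\<^sup>2) = 0\<close> and \<open>tr S\<^sup>2 = 2(d - 1)\<phi>\<^sup>2 + 2\<theta>\<^sup>2\<close>; as \<open>S\<^sup>2 - \<phi>\<^sup>2\<close> is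
  symmetric the power may be dropped.

  The projection of the all-ones vector \<open>j\<close> onto the \<open>-\<phi>\<close>-eigenspace is an explicit
  nonzero multiple of \<open>(\<i> T - \<phi>) w\<close> with \<open>w = S\<^sup>2 j - \<theta>\<^sup>2 j\<close>, so a vanishing main angle
  forces \<open>S\<^sup>2 j = \<theta>\<^sup>2 j\<close>. Then the score vector \<open>t = T j\<close> satisfies \<open>S\<^sup>2 t = \<theta>\<^sup>2 t\<close>,
  \<open>t \<bottom> j\<close> and \<open>|t|\<^sup>2 = n \<theta>\<^sup>2\<close>, and the trace identity shows that \<open>(S\<^sup>2 - \<phi>\<^sup>2)/(\<theta>\<^sup>2 - \<phi>\<^sup>2)\<close>
  is exactly the orthogonal projection onto \<open>span {j, t}\<close>. Its diagonal gives \<open>t\<^sub>x = \<plusminus>\<theta>\<close>,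
  so \<open>S\<^sup>2\<close> is \<open>\<phi>\<^sup>2 I\<close> plus \<open>2(\<theta>\<^sup>2 - \<phi>\<^sup>2)/n\<close> on pairs of vertices with scores of equal
  sign. As \<open>\<Sum> t = 0\<close> both sign classes have \<open>d\<close> vertices, and since row \<open>x\<close> of \<open>T\<close>
  sums to zero over the class of \<open>x\<close>, \<open>d - 1\<close> is even. Integrality of \<open>S\<^sup>2\<close> makes
  \<open>k = \<phi>\<^sup>2\<close> and \<open>l = 2(\<theta>\<^sup>2 - \<phi>\<^sup>2)/n\<close> positive integers.
\<close>

section \<open>Split characteristic polynomials\<close>

lemma index_mult_mat_sum:
  assumes "A \<in> carrier_mat nr n" "B \<in> carrier_mat n nc" "i < nr" "j < nc"
  shows "(A * B) $$ (i, j) = (\<Sum>k<n. A $$ (i, k) * B $$ (k, j))"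
  using assms by (simp add: scalar_prod_def atLeast0LessThan)

lemma index_mult_mat_vec_sum:
  assumes "A \<in> carrier_mat nr n" "v \<in> carrier_vec n" "i < nr"
  shows "(A *\<^sub>v v) $ i = (\<Sum>k<n. A $$ (i, k) * v $ k)"
  using assms by (simp add: scalar_prod_def atLeast0LessThan)

primrec mat_prod_list :: "nat \<Rightarrow> 'a::semiring_1 mat list \<Rightarrow> 'a mat" where
  "mat_prod_list n [] = 1\<^sub>m n"
| "mat_prod_list n (X # Xs) = X * mat_prod_list n Xs"

lemma mat_prod_list_carrier [simp]:
  "set Xs \<subseteq> carrier_mat n n \<Longrightarrow> mat_prod_list n Xs \<in> carrier_mat n n"
  by (induct Xs) auto

lemma mat_prod_list_append:
  assumes "set Xs \<subseteq> carrier_mat n n" "set Ys \<subseteq> carrier_mat n n"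
  shows "mat_prod_list n (Xs @ Ys) = mat_prod_list n Xs * mat_prod_list n Ys"
  using assms(1)
proof (induct Xs)
  case Nil
  then show ?case using mat_prod_list_carrier[OF assms(2)] by simp
next
  case (Cons X Xs)
  then show ?case
    using assoc_mult_mat[of X n n "mat_prod_list n Xs" n "mat_prod_list n Ys" n] assms(2) by simp
qed

lemma mat_prod_list_pairs:
  assumes "A \<in> carrier_mat n n" "B \<in> carrier_mat n n"
  shows "mat_prod_list n (concat (replicate m [A, B])) = mat_prod_list n (replicate m (A * B))"
proof (induct m)
  case (Suc m)
  have "mat_prod_list n (replicate m (A * B)) \<in> carrier_mat n n"
    using assms by (intro mat_prod_list_carrier) auto
  then show ?case using Suc assms by (simp add: assoc_mult_mat)
qed simp

lemma (in semiring_hom) mat_hom_mat_prod_list: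
  "set Xs \<subseteq> carrier_mat n n \<Longrightarrow> mat\<^sub>h (mat_prod_list n Xs) = mat_prod_list n (map mat\<^sub>h Xs)"
  by (induct Xs) (auto simp: mat_hom_one mat_hom_mult[of _ n n _ n])

lemma similar_mat_wit_mat_prod_list:
  assumes "similar_mat_wit S B P Q" "S \<in> carrier_mat n n" "set Xs \<subseteq> carrier_mat n n"
  shows "mat_prod_list n (map (\<lambda>X. P * X * Q) Xs) = P * mat_prod_list n Xs * Q"
proof -
  from similar_mat_witD2[OF assms(2,1)]
  have P: "P \<in> carrier_mat n n" and Q: "Q \<in> carrier_mat n n" and QP: "Q * P = 1\<^sub>m n"
    and PQ: "P * Q = 1\<^sub>m n" by auto
  show ?thesis
    using assms(3)
  proof (induct Xs)
    case Nil
    then show ?case using P PQ by simp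
  next
    case (Cons X Xs)
    let ?W = "mat_prod_list n Xs"
    have X: "X \<in> carrier_mat n n" and W: "?W \<in> carrier_mat n n" using Cons by auto
    have "P * X * Q * (P * ?W * Q) = P * X * (Q * P) * ?W * Q"
      using P Q X W by (simp add: assoc_mult_mat[of _ n n _ n _ n])
    then show ?case using Cons P X W QP by simp
  qed
qed

lemma similar_mat_wit_shift:
  fixes S :: "'a::comm_ring_1 mat"
  assumes "similar_mat_wit S B P Q" "S \<in> carrier_mat n n"
  shows "S - e \<cdot>\<^sub>m 1\<^sub>m n = P * (B - e \<cdot>\<^sub>m 1\<^sub>m n) * Q"
proof -
  from similar_mat_witD2[OF assms(2,1)]
  have B: "B \<in> carrier_mat n n" and P: "P \<in> carrier_mat n n" and Q: "Q \<in> carrier_mat n n"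
    and PQ: "P * Q = 1\<^sub>m n" and S: "S = P * B * Q" by auto
  have "P * (B - e \<cdot>\<^sub>m 1\<^sub>m n) * Q = (P * B - e \<cdot>\<^sub>m P) * Q"
    using B P mult_smult_distrib[OF P, of "1\<^sub>m n" n e] by (simp add: mult_minus_distrib_mat[OF P B])
  also have "\<dots> = P * B * Q - e \<cdot>\<^sub>m (P * Q)"
    using B P Q by (simp add: minus_mult_distrib_mat[of _ n n _ _ n] mult_smult_assoc_mat)
  finally show ?thesis using S PQ by simp
qed

lemma upper_triangular_shift_prod_rows_eq_0:
  fixes B :: "'a::comm_ring_1 mat"
  assumes B: "B \<in> carrier_mat n n" and ut: "upper_triangular B"
    and "k \<le> i" "i < n" "j < n"
  shows "mat_prod_list n (map (\<lambda>e. B - e \<cdot>\<^sub>m 1\<^sub>m n) (drop k (diag_mat B))) $$ (i, j) = 0"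
  using assms(3-)
proof (induct "n - k" arbitrary: k i)
  case 0
  then show ?case by simp
next
  case (Suc r)
  let ?V = "mat_prod_list n (map (\<lambda>e. B - e \<cdot>\<^sub>m 1\<^sub>m n) (drop (Suc k) (diag_mat B)))"
  let ?X = "B - B $$ (k, k) \<cdot>\<^sub>m 1\<^sub>m n"
  have k: "k < n" using Suc by simp
  have V: "?V \<in> carrier_mat n n" using B by (intro mat_prod_list_carrier) (auto dest: in_set_dropD)
  have V0: "?V $$ (l, j) = 0" if "Suc k \<le> l" "l < n" for l
    using Suc that by simp
  have "drop k (diag_mat B) = B $$ (k, k) # drop (Suc k) (diag_mat B)"
    using B k by (simp add: diag_mat_def drop_map del: upt_Suc) (simp add: upt_conv_Cons)
  then have "mat_prod_list n (map (\<lambda>e. B - e \<cdot>\<^sub>m 1\<^sub>m n) (drop k (diag_mat B))) $$ (i, j)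
      = (?X * ?V) $$ (i, j)"
    by simp
  also have "\<dots> = (\<Sum>l<n. ?X $$ (i, l) * ?V $$ (l, j))"
    by (rule index_mult_mat_sum) (use B V Suc.prems in auto)
  also have "\<dots> = 0"
  proof (rule sum.neutral, intro ballI)
    fix l assume l: "l \<in> {..<n}"
    consider "l < i" | "l = k" "i = k" | "Suc k \<le> l"
      using Suc.prems by linarith
    then show "?X $$ (i, l) * ?V $$ (l, j) = 0"
    proof cases
      case 1
      then show ?thesis using ut B l Suc.prems unfolding upper_triangular_def by auto
    qed (use B l V0 in auto)
  qed
  finally show ?case .
qed

lemma upper_triangular_shift_prod_eq_0:
  fixes B :: "'a::comm_ring_1 mat"
  assumes "B \<in> carrier_mat n n" "upper_triangular B"
  shows "mat_prod_list n (map (\<lambda>e. B - e \<cdot>\<^sub>m 1\<^sub>m n) (diag_mat B)) = 0\<^sub>m n n"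
proof -
  have "mat_prod_list n (map (\<lambda>e. B - e \<cdot>\<^sub>m 1\<^sub>m n) (diag_mat B)) \<in> carrier_mat n n"
    using assms(1) by (intro mat_prod_list_carrier) auto
  then show ?thesis
    using upper_triangular_shift_prod_rows_eq_0[OF assms, of 0] by (intro eq_matI) auto
qed

theorem cayley_hamilton_split:
  fixes S :: "'a::conjugatable_ordered_field mat"
  assumes S: "S \<in> carrier_mat n n" and cp: "char_poly S = (\<Prod>e\<leftarrow>es. [:- e, 1:])"
  shows "mat_prod_list n (map (\<lambda>e. S - e \<cdot>\<^sub>m 1\<^sub>m n) es) = 0\<^sub>m n n"
proof -
  obtain B P Q where "schur_decomposition S es = (B, P, Q)"
    by (cases "schur_decomposition S es") auto
  from schur_decomposition[OF S cp this]
  have sim: "similar_mat_wit S B P Q" and ut: "upper_triangular B" and es: "diag_mat B = es"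
    by auto
  from similar_mat_witD2[OF S sim]
  have B: "B \<in> carrier_mat n n" and P: "P \<in> carrier_mat n n" and Q: "Q \<in> carrier_mat n n"
    by auto
  have "mat_prod_list n (map (\<lambda>e. S - e \<cdot>\<^sub>m 1\<^sub>m n) es)
      = mat_prod_list n (map (\<lambda>X. P * X * Q) (map (\<lambda>e. B - e \<cdot>\<^sub>m 1\<^sub>m n) es))"
    using similar_mat_wit_shift[OF sim S] by (simp add: comp_def)
  also have "\<dots> = P * mat_prod_list n (map (\<lambda>e. B - e \<cdot>\<^sub>m 1\<^sub>m n) es) * Q"
    by (rule similar_mat_wit_mat_prod_list[OF sim S]) (use B in auto)
  finally show ?thesis
    using upper_triangular_shift_prod_eq_0[OF B ut] es P Q by simp
qed

definition mat_trace :: "'a::comm_ring_1 mat \<Rightarrow> 'a" where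
  "mat_trace A = (\<Sum>i<dim_row A. A $$ (i, i))"

lemma mat_trace_mult_commute:
  assumes A: "A \<in> carrier_mat n m" and B: "B \<in> carrier_mat m n"
  shows "mat_trace (A * B) = mat_trace (B * A)"
proof -
  have "mat_trace (A * B) = (\<Sum>i<n. \<Sum>k<m. A $$ (i, k) * B $$ (k, i))"
    unfolding mat_trace_def using A by (intro sum.cong) (auto simp: index_mult_mat_sum[OF A B])
  also have "\<dots> = (\<Sum>k<m. \<Sum>i<n. B $$ (k, i) * A $$ (i, k))"
    by (subst sum.swap) (simp add: mult.commute)
  also have "\<dots> = mat_trace (B * A)"
    unfolding mat_trace_def using B by (intro sum.cong) (auto simp: index_mult_mat_sum[OF B A])
  finally show ?thesis .
qed

lemma mat_trace_upper_triangular_square: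
  fixes B :: "'a::comm_ring_1 mat"
  assumes B: "B \<in> carrier_mat n n" and ut: "upper_triangular B"
  shows "mat_trace (B * B) = (\<Sum>e\<leftarrow>diag_mat B. e * e)"
proof -
  have "(B * B) $$ (i, i) = B $$ (i, i) * B $$ (i, i)" if i: "i < n" for i
  proof -
    have "(B * B) $$ (i, i) = (\<Sum>k<n. B $$ (i, k) * B $$ (k, i))"
      by (rule index_mult_mat_sum[OF B B i i])
    also have "\<dots> = (\<Sum>k<n. if k = i then B $$ (i, i) * B $$ (i, i) else 0)"
      using ut B i unfolding upper_triangular_def
      by (intro sum.cong refl) (metis carrier_matD(1) lessThan_iff linorder_neqE_nat mult_not_zero)
    finally show ?thesis using i by simp
  qed
  then show ?thesis
    using B by (simp add: mat_trace_def diag_mat_def sum_list_sum_nth atLeast0LessThan)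
qed

lemma mat_trace_square_split:
  fixes S :: "'a::conjugatable_ordered_field mat"
  assumes S: "S \<in> carrier_mat n n" and cp: "char_poly S = (\<Prod>e\<leftarrow>es. [:- e, 1:])"
  shows "mat_trace (S * S) = (\<Sum>e\<leftarrow>es. e * e)"
proof -
  obtain B P Q where "schur_decomposition S es = (B, P, Q)"
    by (cases "schur_decomposition S es") auto
  from schur_decomposition[OF S cp this]
  have sim: "similar_mat_wit S B P Q" and ut: "upper_triangular B" and es: "diag_mat B = es"
    by auto
  from similar_mat_witD2[OF S sim]
  have B: "B \<in> carrier_mat n n" and P: "P \<in> carrier_mat n n" and Q: "Q \<in> carrier_mat n n"
    and QP: "Q * P = 1\<^sub>m n" by auto
  have "S * S = P * (B * B) * Q"
    using similar_mat_wit_mat_prod_list[OF sim S, of "[B, B]"] similar_mat_witD2[OF S sim] B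
    by (simp add: assoc_mult_mat[of _ n n _ n _ n])
  then have "mat_trace (S * S) = mat_trace (Q * (P * (B * B)))"
    using mat_trace_mult_commute[of "P * (B * B)" n n Q] B P Q by (simp add: assoc_mult_mat)
  also have "\<dots> = mat_trace (B * B)"
    using B P Q QP by (simp add: assoc_mult_mat[symmetric, of Q n n P n "B * B" n])
  finally show ?thesis using mat_trace_upper_triangular_square[OF B ut] es by simp
qed

lemma symmetric_mat_mult_cancel:
  fixes N :: "'a::linordered_idom mat"
  assumes N: "N \<in> carrier_mat n n" and sym: "transpose_mat N = N" and Y: "Y \<in> carrier_mat n m"
    and NNY: "N * (N * Y) = 0\<^sub>m n m"
  shows "N * Y = 0\<^sub>m n m"
proof -
  let ?V = "N * Y"
  have V: "?V \<in> carrier_mat n m" using N Y by simp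
  have "transpose_mat ?V * ?V = transpose_mat Y * (N * (N * Y))"
    using N Y sym by (simp add: transpose_mult assoc_mult_mat[of _ m n N n "N * Y" m])
  then have VV: "transpose_mat ?V * ?V = 0\<^sub>m m m" using NNY Y by simp
  show ?thesis
  proof (rule eq_matI)
    fix i j assume i: "i < dim_row (0\<^sub>m n m :: 'a mat)" and j: "j < dim_col (0\<^sub>m n m :: 'a mat)"
    have "(transpose_mat ?V * ?V) $$ (j, j) = (\<Sum>k<n. transpose_mat ?V $$ (j, k) * ?V $$ (k, j))"
      by (rule index_mult_mat_sum) (use V j in auto)
    then have "(\<Sum>k<n. ?V $$ (k, j) * ?V $$ (k, j)) = (transpose_mat ?V * ?V) $$ (j, j)"
      using N Y j by (auto intro!: sum.cong)
    also have "\<dots> = 0" using VV j by simp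
    finally have "\<forall>k\<in>{..<n}. ?V $$ (k, j) * ?V $$ (k, j) = 0"
      by (subst sum_nonneg_eq_0_iff[symmetric]) auto
    then show "?V $$ (i, j) = 0\<^sub>m n m $$ (i, j)" using i j by simp
  qed (use V in auto)
qed

lemma symmetric_mat_power_cancel:
  fixes N :: "'a::linordered_idom mat"
  assumes N: "N \<in> carrier_mat n n" and sym: "transpose_mat N = N" and Y: "Y \<in> carrier_mat n m"
  shows "mat_prod_list n (replicate (Suc k) N) * Y = 0\<^sub>m n m \<Longrightarrow> N * Y = 0\<^sub>m n m"
proof (induct k)
  case (Suc k)
  let ?W = "mat_prod_list n (replicate k N)"
  have W: "?W \<in> carrier_mat n n" using N by (intro mat_prod_list_carrier) auto
  have "N * (N * (?W * Y)) = mat_prod_list n (replicate (Suc (Suc k)) N) * Y"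
    using N W Y by (simp add: assoc_mult_mat[of _ n n _ n _ m] assoc_mult_mat[of _ n n _ n _ n])
  then have "N * (?W * Y) = 0\<^sub>m n m"
    using Suc.prems symmetric_mat_mult_cancel[OF N sym] W Y by simp
  then show ?case
    using Suc.hyps N W Y by (simp add: assoc_mult_mat[of _ n n _ n _ m])
qed (use N Y in simp)

lemma prod_list_concat_replicate:
  "prod_list (map g (concat (replicate k xs))) = prod_list (map g xs) ^ k"
  by (induct k) (auto simp: algebra_simps)

lemma sum_list_concat_replicate:
  "sum_list (map g (concat (replicate k xs))) = of_nat k * sum_list (map g xs)"
  by (induct k) (auto simp: algebra_simps)

lemma symmetric_spectrum_poly_eq_prod:
  fixes a b :: "'a::comm_ring_1"
  shows "[:b, 1:] * [:a, 1:] ^ m * [:- a, 1:] ^ m * [:- b, 1:]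
    = (\<Prod>e\<leftarrow>concat (replicate m [- a, a]) @ [- b, b]. [:- e, 1:])"
proof -
  have "(\<Prod>e\<leftarrow>concat (replicate m [- a, a]) @ [- b, b]. [:- e, 1:])
      = ([:a, 1:] * ([:- a, 1:] * 1)) ^ m * ([:b, 1:] * ([:- b, 1:] * 1))"
    by (simp only: map_append prod_list.append prod_list_concat_replicate list.map
        prod_list.Cons prod_list.Nil minus_minus)
  then show ?thesis
    by (simp only: power_mult_distrib mult_1_right mult_1_left power_one mult.assoc mult.commute
        mult.left_commute)
qed

lemma shift_mult_shift_eq:
  fixes A :: "'a::comm_ring_1 mat"
  assumes A: "A \<in> carrier_mat n n"
  shows "(A - (- a) \<cdot>\<^sub>m 1\<^sub>m n) * (A - a \<cdot>\<^sub>m 1\<^sub>m n) = A * A - (a * a) \<cdot>\<^sub>m 1\<^sub>m n"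
proof (rule eq_matI)
  fix i j assume "i < dim_row (A * A - (a * a) \<cdot>\<^sub>m 1\<^sub>m n)" "j < dim_col (A * A - (a * a) \<cdot>\<^sub>m 1\<^sub>m n)"
  then have i: "i < n" and j: "j < n" using A by auto
  have "((A - (- a) \<cdot>\<^sub>m 1\<^sub>m n) * (A - a \<cdot>\<^sub>m 1\<^sub>m n)) $$ (i, j)
      = (\<Sum>k<n. (A $$ (i, k) + (if i = k then a else 0)) * (A $$ (k, j) - (if k = j then a else 0)))"
    using A i j by (subst index_mult_mat_sum[of _ n n _ n]) (auto intro!: sum.cong)
  also have "\<dots> = (\<Sum>k<n. A $$ (i, k) * A $$ (k, j) - (if k = j then a * A $$ (i, k) else 0)
      + (if i = k then a * A $$ (k, j) else 0) - (if i = k then (if k = j then a * a else 0) else 0))"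
    by (intro sum.cong refl) (simp add: algebra_simps)
  also have "\<dots> = (A * A - (a * a) \<cdot>\<^sub>m 1\<^sub>m n) $$ (i, j)"
    using A i j by (simp add: sum.distrib sum_subtractf index_mult_mat_sum[OF A A i j])
  finally show "((A - (- a) \<cdot>\<^sub>m 1\<^sub>m n) * (A - a \<cdot>\<^sub>m 1\<^sub>m n)) $$ (i, j)
      = (A * A - (a * a) \<cdot>\<^sub>m 1\<^sub>m n) $$ (i, j)" .
qed (use A in auto)

lemma real_eigenvalues_of_char_poly:
  fixes a b :: real
  assumes S: "S \<in> carrier_mat n n" and "m \<noteq> 0"
    and cp: "char_poly S = [:complex_of_real b, 1:] * [:complex_of_real a, 1:] ^ m
      * [:- complex_of_real a, 1:] ^ m * [:- complex_of_real b, 1:]"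
  shows "{t. eigenvalue S (complex_of_real t)} = {- b, - a, a, b}"
proof -
  have "poly (char_poly S) (complex_of_real t)
      = complex_of_real ((b + t) * (a + t) ^ m * (- a + t) ^ m * (- b + t))" for t
    unfolding cp by (simp only: poly_mult poly_power poly_pCons poly_0 mult_zero_right add_0_right
        mult_1_right of_real_mult of_real_power of_real_add of_real_minus)
  then have eig: "eigenvalue S (complex_of_real t)
      \<longleftrightarrow> (b + t) * (a + t) ^ m * (- a + t) ^ m * (- b + t) = 0" for t
    unfolding eigenvalue_root_char_poly[OF S] by (simp only: of_real_eq_0_iff)
  have "(b + t) * (a + t) ^ m * (- a + t) ^ m * (- b + t) = 0
      \<longleftrightarrow> t = - b \<or> t = - a \<or> t = a \<or> t = b" for t
    using \<open>m \<noteq> 0\<close> by (simp only: mult_eq_0_iff power_eq_0_iff) linarith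
  then show ?thesis using eig by auto
qed

lemma distinct_eigs_of_char_poly:
  assumes S: "S \<in> carrier_mat n n" and "0 < \<phi>" "\<phi> < \<theta>" "2 \<le> d"
    and cp: "char_poly S = [:complex_of_real \<theta>, 1:] * [:complex_of_real \<phi>, 1:] ^ (d - 1)
      * [:- complex_of_real \<phi>, 1:] ^ (d - 1) * [:- complex_of_real \<theta>, 1:]"
  shows "distinct_eigs S = [- \<theta>, - \<phi>, \<phi>, \<theta>]"
proof -
  have "sorted_wrt (<) [- \<theta>, - \<phi>, \<phi>, \<theta>]" "distinct [- \<theta>, - \<phi>, \<phi>, \<theta>]"
    using assms(2,3) by auto
  then have "sorted_list_of_set {- \<theta>, - \<phi>, \<phi>, \<theta>} = [- \<theta>, - \<phi>, \<phi>, \<theta>]"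
    by (intro sorted_list_of_set_unique[THEN iffD1]) (auto simp: distinct_card[symmetric])
  then show ?thesis
    using real_eigenvalues_of_char_poly[OF S _ cp] assms(4) by (simp add: distinct_eigs_def)
qed

section \<open>The skew matrix of a tournament\<close>

text \<open>
  \<open>T\<close> stands for \<open>A - A\<^sup>T\<close> and \<open>S\<close> for the Seidel matrix \<open>\<i> T\<close>; \<open>gram\<close> is the entry
  function of \<open>T T\<^sup>T = S\<^sup>2\<close> and \<open>score\<close> that of \<open>T j\<close>.
\<close>

locale skew_sign_matrix =
  fixes n :: nat and T :: "nat \<Rightarrow> nat \<Rightarrow> real"
  assumes skew: "x < n \<Longrightarrow> y < n \<Longrightarrow> T y x = - T x y"
    and off_diag: "x < n \<Longrightarrow> y < n \<Longrightarrow> x \<noteq> y \<Longrightarrow> T x y = 1 \<or> T x y = -1"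
begin

lemma diag_eq_0: "x < n \<Longrightarrow> T x x = 0"
  using skew[of x x] by simp

lemma in_Ints: "x < n \<Longrightarrow> y < n \<Longrightarrow> T x y \<in> \<int>"
  using off_diag[of x y] diag_eq_0[of x] by (cases "x = y") auto

definition gram :: "nat \<Rightarrow> nat \<Rightarrow> real" where
  "gram x z = (\<Sum>y<n. T x y * T z y)"

definition score :: "nat \<Rightarrow> real" where
  "score x = (\<Sum>y<n. T x y)"

definition shifted_gram :: "real \<Rightarrow> nat \<Rightarrow> nat \<Rightarrow> real" where
  "shifted_gram c x z = gram x z - (if x = z then c else 0)"

lemma gram_commute: "gram x z = gram z x"
  unfolding gram_def by (simp add: mult.commute)

lemma shifted_gram_commute: "shifted_gram c x z = shifted_gram c z x"
  unfolding shifted_gram_def by (simp add: gram_commute eq_commute[of x z])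

lemma sum_shifted_gram_mult:
  "x < n \<Longrightarrow> (\<Sum>y<n. shifted_gram c x y * v y) = (\<Sum>y<n. gram x y * v y) - c * v x"
proof -
  assume x: "x < n"
  have "(\<Sum>y<n. (if x = y then c else 0) * v y) = (\<Sum>y<n. if x = y then c * v y else 0)"
    by (intro sum.cong) auto
  then show ?thesis
    using x unfolding shifted_gram_def left_diff_distrib sum_subtractf by simp
qed

lemma gram_diag: "x < n \<Longrightarrow> gram x x = real n - 1"
proof -
  assume x: "x < n"
  have "gram x x = (\<Sum>y\<in>{..<n} - {x}. 1)"
    unfolding gram_def
  proof (rule sum.mono_neutral_cong_right)
    show "\<forall>y\<in>{..<n} - ({..<n} - {x}). T x y * T x y = 0" using diag_eq_0[OF x] by auto
    show "\<And>y. y \<in> {..<n} - {x} \<Longrightarrow> T x y * T x y = 1" using off_diag[OF x] by force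
  qed auto
  then show ?thesis using x by simp
qed

lemma gram_in_Ints: "x < n \<Longrightarrow> z < n \<Longrightarrow> gram x z \<in> \<int>"
  unfolding gram_def by (intro Ints_sum Ints_mult in_Ints) auto

lemma sum_T_mult_T: "z < n \<Longrightarrow> (\<Sum>y<n. T x y * T y z) = - gram x z"
  unfolding gram_def sum_negf[symmetric] by (intro sum.cong refl) (simp add: skew[of _ z])

lemma sum_gram_mult:
  "(\<Sum>y<n. gram x y * v y) = - (\<Sum>k<n. T x k * (\<Sum>y<n. T k y * v y))"
proof -
  have "(\<Sum>y<n. gram x y * v y) = (\<Sum>y<n. \<Sum>k<n. - (T x k * T k y * v y))"
    by (intro sum.cong refl) (simp add: sum_distrib_right[symmetric] sum_negf sum_T_mult_T)
  also have "\<dots> = (\<Sum>k<n. \<Sum>y<n. - (T x k * T k y * v y))"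
    by (rule sum.swap)
  finally show ?thesis by (simp add: sum_distrib_left sum_negf mult.assoc)
qed

lemma sum_score: "(\<Sum>x<n. score x) = 0"
proof -
  have "(\<Sum>x<n. score x) = (\<Sum>y<n. \<Sum>x<n. T x y)"
    unfolding score_def by (rule sum.swap)
  also have "\<dots> = - (\<Sum>x<n. score x)"
    unfolding score_def sum_negf[symmetric] by (intro sum.cong refl) (metis lessThan_iff skew)
  finally show ?thesis by simp
qed

lemma sum_T_mult_score: "(\<Sum>y<n. T x y * score y) = - (\<Sum>z<n. gram x z)"
proof -
  have "(\<Sum>y<n. T x y * score y) = (\<Sum>y<n. \<Sum>z<n. T x y * T y z)"
    unfolding score_def by (simp add: sum_distrib_left)
  also have "\<dots> = (\<Sum>z<n. \<Sum>y<n. T x y * T y z)"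
    by (rule sum.swap)
  finally show ?thesis by (simp add: sum_T_mult_T sum_negf)
qed

lemma sum_score_sq: "(\<Sum>x<n. (score x)\<^sup>2) = (\<Sum>x<n. \<Sum>z<n. gram x z)"
proof -
  have "(\<Sum>x<n. (score x)\<^sup>2) = (\<Sum>x<n. \<Sum>y<n. T x y * score x)"
    unfolding power2_eq_square score_def[of x for x] by (simp add: sum_distrib_right)
  also have "\<dots> = (\<Sum>y<n. \<Sum>x<n. T x y * score x)"
    by (rule sum.swap)
  also have "\<dots> = (\<Sum>y<n. - (\<Sum>x<n. T y x * score x))"
    unfolding sum_negf[symmetric] by (intro sum.cong refl) (metis lessThan_iff skew minus_mult_left)
  finally show ?thesis by (simp add: sum_T_mult_score)
qed

end

locale seidel_matrix = skew_sign_matrix +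
  fixes S :: "complex mat"
  assumes S_carrier: "S \<in> carrier_mat n n"
    and S_entry: "\<And>x y. x < n \<Longrightarrow> y < n \<Longrightarrow> S $$ (x, y) = \<i> * complex_of_real (T x y)"
begin

definition gram_mat :: "real mat" where
  "gram_mat = mat n n (\<lambda>(x, z). gram x z)"

lemma gram_mat_carrier [simp]: "gram_mat \<in> carrier_mat n n"
  unfolding gram_mat_def by simp

lemma seidel_square: "S * S = map_mat complex_of_real gram_mat"
proof (rule eq_matI)
  fix x z assume "x < dim_row (map_mat complex_of_real gram_mat)"
    "z < dim_col (map_mat complex_of_real gram_mat)"
  then have x: "x < n" and z: "z < n" by (auto simp: gram_mat_def)
  have "(S * S) $$ (x, z) = (\<Sum>y<n. S $$ (x, y) * S $$ (y, z))"
    by (rule index_mult_mat_sum[OF S_carrier S_carrier x z])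
  also have "\<dots> = (\<Sum>y<n. - complex_of_real (T x y * T y z))"
    using x z by (intro sum.cong refl) (simp add: S_entry mult_ac)
  also have "\<dots> = - complex_of_real (\<Sum>y<n. T x y * T y z)"
    by (simp add: sum_negf)
  also have "\<dots> = complex_of_real (gram x z)"
    using sum_T_mult_T[OF z, of x] by simp
  finally show "(S * S) $$ (x, z) = map_mat complex_of_real gram_mat $$ (x, z)"
    using x z by (simp add: gram_mat_def)
qed (use S_carrier in \<open>auto simp: gram_mat_def\<close>)

lemma gram_mat_symmetric: "transpose_mat (gram_mat - c \<cdot>\<^sub>m 1\<^sub>m n) = gram_mat - c \<cdot>\<^sub>m 1\<^sub>m n"
  by (rule eq_matI) (auto simp: gram_mat_def gram_commute)

lemma gram_shifts_annihilate:
  assumes d: "2 \<le> d"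
    and cp: "char_poly S = [:complex_of_real \<theta>, 1:] * [:complex_of_real \<phi>, 1:] ^ (d - 1)
      * [:- complex_of_real \<phi>, 1:] ^ (d - 1) * [:- complex_of_real \<theta>, 1:]"
  shows "(gram_mat - (\<phi> * \<phi>) \<cdot>\<^sub>m 1\<^sub>m n) * (gram_mat - (\<theta> * \<theta>) \<cdot>\<^sub>m 1\<^sub>m n) = 0\<^sub>m n n"
proof -
  let ?es = "concat (replicate (d - 1) [- complex_of_real \<phi>, complex_of_real \<phi>])
    @ [- complex_of_real \<theta>, complex_of_real \<theta>]"
  let ?shift = "\<lambda>e. S - e \<cdot>\<^sub>m 1\<^sub>m n"
  let ?N = "gram_mat - (\<phi> * \<phi>) \<cdot>\<^sub>m 1\<^sub>m n" and ?M = "gram_mat - (\<theta> * \<theta>) \<cdot>\<^sub>m 1\<^sub>m n"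
  have shift: "?shift e \<in> carrier_mat n n" for e by (intro minus_carrier_mat) auto
  have pair: "?shift (- complex_of_real r) * ?shift (complex_of_real r)
      = map_mat complex_of_real (gram_mat - (r * r) \<cdot>\<^sub>m 1\<^sub>m n)" for r
    unfolding shift_mult_shift_eq[OF S_carrier] seidel_square
    by (rule eq_matI) (auto simp: gram_mat_def)
  have CH: "mat_prod_list n (map ?shift ?es) = 0\<^sub>m n n"
    using cayley_hamilton_split[OF S_carrier] cp symmetric_spectrum_poly_eq_prod by metis
  have N: "?N \<in> carrier_mat n n" and M: "?M \<in> carrier_mat n n" by auto
  have "mat_prod_list n (map ?shift ?es)
      = mat_prod_list n (replicate (d - 1) (map_mat complex_of_real ?N)) * map_mat complex_of_real ?M"
    using shift pair[of \<phi>] pair[of \<theta>]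
    by (simp add: mat_prod_list_append map_concat mat_prod_list_pairs)
  also have "\<dots> = map_mat complex_of_real (mat_prod_list n (replicate (d - 1) ?N))
      * map_mat complex_of_real ?M"
    by (subst of_real_hom.mat_hom_mat_prod_list) (use N in auto)
  also have "\<dots> = map_mat complex_of_real (mat_prod_list n (replicate (d - 1) ?N) * ?M)"
    by (rule of_real_hom.mat_hom_mult[symmetric, of _ n n]) (use N M in \<open>auto intro: mat_prod_list_carrier\<close>)
  finally have "map_mat complex_of_real (mat_prod_list n (replicate (d - 1) ?N) * ?M)
      = map_mat complex_of_real (0\<^sub>m n n)"
    using CH by auto
  then have "mat_prod_list n (replicate (Suc (d - 2)) ?N) * ?M = 0\<^sub>m n n"
    using d by (simp add: Suc_diff_Suc numeral_2_eq_2 of_real_hom.mat_hom_inj)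
  then show ?thesis
    by (rule symmetric_mat_power_cancel[rotated -1]) (auto simp: gram_mat_symmetric)
qed

lemma sum_shifted_grams_eq_0:
  assumes "2 \<le> d"
    and "char_poly S = [:complex_of_real \<theta>, 1:] * [:complex_of_real \<phi>, 1:] ^ (d - 1)
      * [:- complex_of_real \<phi>, 1:] ^ (d - 1) * [:- complex_of_real \<theta>, 1:]"
    and x: "x < n" and z: "z < n"
  shows "(\<Sum>y<n. shifted_gram (\<phi>\<^sup>2) x y * shifted_gram (\<theta>\<^sup>2) y z) = 0"
proof -
  let ?N = "gram_mat - (\<phi> * \<phi>) \<cdot>\<^sub>m 1\<^sub>m n" and ?M = "gram_mat - (\<theta> * \<theta>) \<cdot>\<^sub>m 1\<^sub>m n"
  have "(?N * ?M) $$ (x, z) = (\<Sum>y<n. ?N $$ (x, y) * ?M $$ (y, z))"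
    by (rule index_mult_mat_sum) (use x z in auto)
  also have "\<dots> = (\<Sum>y<n. shifted_gram (\<phi>\<^sup>2) x y * shifted_gram (\<theta>\<^sup>2) y z)"
    using x z by (intro sum.cong refl) (auto simp: gram_mat_def shifted_gram_def power2_eq_square)
  finally show ?thesis
    using gram_shifts_annihilate[OF assms(1,2)] x z by simp
qed

lemma trace_gram_of_char_poly:
  assumes cp: "char_poly S = [:complex_of_real \<theta>, 1:] * [:complex_of_real \<phi>, 1:] ^ (d - 1)
      * [:- complex_of_real \<phi>, 1:] ^ (d - 1) * [:- complex_of_real \<theta>, 1:]"
  shows "(\<Sum>x<n. gram x x) = 2 * real (d - 1) * \<phi>\<^sup>2 + 2 * \<theta>\<^sup>2"
proof -
  have "complex_of_real (\<Sum>x<n. gram x x) = mat_trace (S * S)"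
    by (simp add: seidel_square mat_trace_def gram_mat_def)
  also have "\<dots> = (\<Sum>e\<leftarrow>concat (replicate (d - 1) [- complex_of_real \<phi>, complex_of_real \<phi>])
      @ [- complex_of_real \<theta>, complex_of_real \<theta>]. e * e)"
    by (rule mat_trace_square_split[OF S_carrier]) (simp only: cp symmetric_spectrum_poly_eq_prod)
  also have "\<dots> = complex_of_real (2 * real (d - 1) * \<phi>\<^sup>2 + 2 * \<theta>\<^sup>2)"
    by (simp add: sum_list_concat_replicate power2_eq_square algebra_simps)
  finally show ?thesis by (simp only: of_real_eq_iff)
qed

end

section \<open>Squares with two eigenvalues\<close>

lemma idempotent_trace_zero_eq_0:
  fixes R :: "nat \<Rightarrow> nat \<Rightarrow> real"
  assumes idem: "\<And>x. x < n \<Longrightarrow> (\<Sum>z<n. (R x z)\<^sup>2) = R x x"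
    and trace: "(\<Sum>x<n. R x x) = 0" and "x < n" "z < n"
  shows "R x z = 0"
proof -
  have "(\<Sum>x<n. \<Sum>z<n. (R x z)\<^sup>2) = 0" using idem trace by simp
  then have "(\<Sum>z<n. (R x z)\<^sup>2) = 0"
    using \<open>x < n\<close> by (subst (asm) sum_nonneg_eq_0_iff) (auto intro: sum_nonneg)
  then show ?thesis
    using \<open>z < n\<close> by (subst (asm) sum_nonneg_eq_0_iff) auto
qed

lemma even_card_if_sum_signs_eq_0:
  fixes f :: "'a \<Rightarrow> real"
  assumes "finite A" and signs: "\<And>y. y \<in> A \<Longrightarrow> f y = 1 \<or> f y = -1" and "sum f A = 0"
  shows "even (card A)"
proof -
  have "real (card A) = (\<Sum>y\<in>A. f y + 1)"
    using \<open>sum f A = 0\<close> by (simp add: sum.distrib)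
  also have "\<dots> = (\<Sum>y\<in>A. if f y = 1 then 2 else 0)"
    by (intro sum.cong refl) (use signs in force)
  also have "\<dots> = 2 * real (card {y \<in> A. f y = 1})"
    using \<open>finite A\<close> by (simp add: sum.inter_filter[symmetric])
  finally have "card A = 2 * card {y \<in> A. f y = 1}" by linarith
  then show ?thesis by simp
qed

lemma Ints_pos_obtain_nat:
  fixes x :: real
  assumes "x \<in> \<int>" "0 < x"
  obtains m :: nat where "x = real m" "0 < m"
proof -
  have "x \<in> \<nat>" using assms by (simp add: Nats_altdef2)
  then obtain m where "x = real m" by (cases rule: Nats_cases) simp
  with assms that show ?thesis by simp
qed

text \<open>The assumption \<open>annihilate\<close> is \<open>(S\<^sup>2 - \<phi>\<^sup>2)(S\<^sup>2 - \<theta>\<^sup>2) = 0\<close>, written entrywise.\<close>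

locale gram_two_eigenvalues = skew_sign_matrix +
  fixes \<phi> \<theta> :: real
  assumes phi_pos: "0 < \<phi>" and phi_less_theta: "\<phi> < \<theta>"
    and annihilate: "\<And>x z. x < n \<Longrightarrow> z < n \<Longrightarrow>
      (\<Sum>y<n. shifted_gram (\<phi>\<^sup>2) x y * shifted_gram (\<theta>\<^sup>2) y z) = 0"
begin

definition gap :: real where
  "gap = \<theta>\<^sup>2 - \<phi>\<^sup>2"

lemma gap_pos: "gap > 0"
  unfolding gap_def using phi_pos phi_less_theta by (simp add: power_strict_mono)

lemma theta_pos: "\<theta> > 0"
  using phi_pos phi_less_theta by simp

lemma shifted_gram_square:
  assumes "x < n" "z < n"
  shows "(\<Sum>y<n. shifted_gram (\<phi>\<^sup>2) x y * shifted_gram (\<phi>\<^sup>2) y z) = gap * shifted_gram (\<phi>\<^sup>2) x z"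
proof -
  have "(\<Sum>y<n. shifted_gram (\<phi>\<^sup>2) x y * shifted_gram (\<phi>\<^sup>2) y z)
      = (\<Sum>y<n. shifted_gram (\<phi>\<^sup>2) x y * shifted_gram (\<theta>\<^sup>2) y z
                + (if y = z then gap * shifted_gram (\<phi>\<^sup>2) x z else 0))"
    by (intro sum.cong refl) (simp add: shifted_gram_def gap_def algebra_simps)
  then show ?thesis using annihilate[OF assms] assms(2) by (simp add: sum.distrib)
qed

text \<open>
  Under the row-sum and trace assumptions below, \<open>residual\<close> is a symmetric idempotent of
  trace zero: \<open>(S\<^sup>2 - \<phi>\<^sup>2)/gap\<close> is a projection fixing \<open>j\<close> and \<open>t\<close>, which are orthogonal.
\<close>

definition residual :: "nat \<Rightarrow> nat \<Rightarrow> real" where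
  "residual x z = shifted_gram (\<phi>\<^sup>2) x z / gap - 1 / real n - score x * score z / (real n * \<theta>\<^sup>2)"

context
  assumes row_sum: "\<And>x. x < n \<Longrightarrow> (\<Sum>z<n. gram x z) = \<theta>\<^sup>2"
    and trace_gram: "(\<Sum>x<n. gram x x) = (real n - 2) * \<phi>\<^sup>2 + 2 * \<theta>\<^sup>2"
begin

lemma shifted_gram_row_sum: "x < n \<Longrightarrow> (\<Sum>z<n. shifted_gram (\<phi>\<^sup>2) x z) = gap"
  by (simp add: shifted_gram_def sum_subtractf row_sum gap_def)

lemma gram_mult_score: "(\<Sum>y<n. gram x y * score y) = \<theta>\<^sup>2 * score x"
proof -
  have "(\<Sum>y<n. gram x y * score y) = - (\<Sum>k<n. T x k * (\<Sum>y<n. T k y * score y))"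
    by (rule sum_gram_mult)
  also have "\<dots> = - (\<Sum>k<n. T x k * - \<theta>\<^sup>2)"
    by (intro arg_cong[where f = uminus] sum.cong refl) (simp add: sum_T_mult_score row_sum)
  also have "\<dots> = \<theta>\<^sup>2 * score x"
    by (simp add: score_def sum_negf sum_distrib_right[symmetric] mult.commute)
  finally show ?thesis .
qed

lemma shifted_gram_mult_score:
  "x < n \<Longrightarrow> (\<Sum>y<n. shifted_gram (\<phi>\<^sup>2) x y * score y) = gap * score x"
  by (simp add: sum_shifted_gram_mult gram_mult_score gap_def left_diff_distrib)

lemma sum_score_sq_eq: "(\<Sum>x<n. (score x)\<^sup>2) = real n * \<theta>\<^sup>2"
  by (simp add: sum_score_sq row_sum)

lemma trace_identity: "real n * (real n - 1 - \<phi>\<^sup>2) = 2 * gap"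
proof -
  have "(\<Sum>x<n. gram x x) = real n * (real n - 1)" by (simp add: gram_diag)
  with trace_gram show ?thesis unfolding gap_def by (simp add: algebra_simps)
qed

lemma residual_row_sum: "x < n \<Longrightarrow> (\<Sum>z<n. residual x z) = 0"
proof -
  assume x: "x < n"
  have "(\<Sum>z<n. residual x z) = (\<Sum>z<n. shifted_gram (\<phi>\<^sup>2) x z) / gap - real n * (1 / real n)
      - score x * (\<Sum>z<n. score z) / (real n * \<theta>\<^sup>2)"
    unfolding residual_def
    by (simp add: sum_subtractf sum_divide_distrib[symmetric] sum_distrib_left[symmetric])
  then show ?thesis using shifted_gram_row_sum[OF x] sum_score gap_pos x by simp
qed

lemma residual_mult_score: "x < n \<Longrightarrow> (\<Sum>z<n. residual x z * score z) = 0"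
proof -
  assume x: "x < n"
  have "(\<Sum>z<n. residual x z * score z)
      = (\<Sum>z<n. shifted_gram (\<phi>\<^sup>2) x z * score z) / gap - (\<Sum>z<n. score z) / real n
        - score x * (\<Sum>z<n. (score z)\<^sup>2) / (real n * \<theta>\<^sup>2)"
    unfolding residual_def using gap_pos
    by (simp add: left_diff_distrib sum_subtractf sum_divide_distrib[symmetric]
        sum_distrib_left[symmetric] power2_eq_square mult.assoc)
  then show ?thesis
    using shifted_gram_mult_score[OF x] sum_score sum_score_sq_eq gap_pos theta_pos x by simp
qed

lemma residual_mult_shifted_gram:
  "x < n \<Longrightarrow> (\<Sum>z<n. residual x z * shifted_gram (\<phi>\<^sup>2) x z) = gap * residual x x"
proof -
  assume x: "x < n"
  have "(\<Sum>z<n. shifted_gram (\<phi>\<^sup>2) x z * shifted_gram (\<phi>\<^sup>2) x z)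
      = (\<Sum>z<n. shifted_gram (\<phi>\<^sup>2) x z * shifted_gram (\<phi>\<^sup>2) z x)"
    by (intro sum.cong refl) (metis shifted_gram_commute)
  also have "\<dots> = gap * shifted_gram (\<phi>\<^sup>2) x x"
    by (rule shifted_gram_square[OF x x])
  finally have "(\<Sum>z<n. shifted_gram (\<phi>\<^sup>2) x z * shifted_gram (\<phi>\<^sup>2) x z)
      = gap * shifted_gram (\<phi>\<^sup>2) x x" .
  then have "(\<Sum>z<n. residual x z * shifted_gram (\<phi>\<^sup>2) x z)
      = shifted_gram (\<phi>\<^sup>2) x x - (\<Sum>z<n. shifted_gram (\<phi>\<^sup>2) x z) / real n
        - score x * (\<Sum>z<n. shifted_gram (\<phi>\<^sup>2) x z * score z) / (real n * \<theta>\<^sup>2)"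
    unfolding residual_def using gap_pos
    by (simp add: left_diff_distrib sum_subtractf sum_divide_distrib[symmetric]
        sum_distrib_left[symmetric] power2_eq_square mult.assoc) (simp add: mult.commute)
  also have "\<dots> = gap * residual x x"
    using shifted_gram_row_sum[OF x] shifted_gram_mult_score[OF x] gap_pos theta_pos x
    unfolding residual_def by (simp add: field_simps power2_eq_square)
  finally show ?thesis .
qed

lemma residual_idempotent: "x < n \<Longrightarrow> (\<Sum>z<n. (residual x z)\<^sup>2) = residual x x"
proof -
  assume x: "x < n"
  have "(\<Sum>z<n. (residual x z)\<^sup>2)
      = (\<Sum>z<n. residual x z * shifted_gram (\<phi>\<^sup>2) x z / gap - residual x z / real n
          - score x * (residual x z * score z) / (real n * \<theta>\<^sup>2))"
    unfolding residual_def[of x z for z] using gap_pos theta_pos x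
    by (intro sum.cong refl) (simp add: field_simps power2_eq_square)
  also have "\<dots> = (\<Sum>z<n. residual x z * shifted_gram (\<phi>\<^sup>2) x z) / gap
      - (\<Sum>z<n. residual x z) / real n
      - score x * (\<Sum>z<n. residual x z * score z) / (real n * \<theta>\<^sup>2)"
    by (simp add: sum_subtractf sum_divide_distrib[symmetric] sum_distrib_left[symmetric])
  finally show ?thesis
    using residual_mult_shifted_gram[OF x] residual_row_sum[OF x] residual_mult_score[OF x] gap_pos
    by simp
qed

lemma residual_trace: "(\<Sum>x<n. residual x x) = 0"
proof (cases "n = 0")
  case False
  have "(\<Sum>x<n. residual x x) = (\<Sum>x<n. shifted_gram (\<phi>\<^sup>2) x x) / gap - real n * (1 / real n)
      - (\<Sum>x<n. (score x)\<^sup>2) / (real n * \<theta>\<^sup>2)"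
    unfolding residual_def by (simp add: sum_subtractf sum_divide_distrib[symmetric] power2_eq_square)
  also have "(\<Sum>x<n. shifted_gram (\<phi>\<^sup>2) x x) = real n * (real n - 1 - \<phi>\<^sup>2)"
    by (simp add: shifted_gram_def gram_diag)
  finally show ?thesis
    using trace_identity sum_score_sq_eq gap_pos theta_pos False by simp
qed simp

lemma residual_eq_0: "x < n \<Longrightarrow> z < n \<Longrightarrow> residual x z = 0"
  by (rule idempotent_trace_zero_eq_0[OF residual_idempotent residual_trace])

lemma shifted_gram_diag: "x < n \<Longrightarrow> shifted_gram (\<phi>\<^sup>2) x x = 2 * gap / real n"
  using trace_identity by (simp add: shifted_gram_def gram_diag field_simps)

lemma score_sq: "x < n \<Longrightarrow> (score x)\<^sup>2 = \<theta>\<^sup>2"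
  using residual_eq_0[of x x] shifted_gram_diag[of x] gap_pos theta_pos
  by (simp add: residual_def field_simps power2_eq_square)

lemma score_eq_theta: "x < n \<Longrightarrow> 0 < score x \<Longrightarrow> score x = \<theta>"
  using score_sq[of x] theta_pos by (auto simp: power2_eq_iff)

lemma score_eq_minus_theta: "x < n \<Longrightarrow> \<not> 0 < score x \<Longrightarrow> score x = - \<theta>"
  using score_sq[of x] theta_pos by (auto simp: power2_eq_iff)

lemma gram_eq_sign_classes:
  assumes "x < n" "z < n"
  shows "gram x z = (if x = z then \<phi>\<^sup>2 else 0)
    + (if (0 < score x) = (0 < score z) then 2 * gap / real n else 0)"
proof -
  have "shifted_gram (\<phi>\<^sup>2) x z = gap / real n + gap * (score x * score z) / (real n * \<theta>\<^sup>2)"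
    using residual_eq_0[OF assms] gap_pos unfolding residual_def by (simp add: field_simps)
  moreover have "score x * score z = (if (0 < score x) = (0 < score z) then \<theta>\<^sup>2 else - \<theta>\<^sup>2)"
    using score_eq_theta[OF assms(1)] score_eq_minus_theta[OF assms(1)]
      score_eq_theta[OF assms(2)] score_eq_minus_theta[OF assms(2)]
    by (auto simp: power2_eq_square)
  then have "gap * (score x * score z) / (real n * \<theta>\<^sup>2)
      = (if (0 < score x) = (0 < score z) then gap / real n else - gap / real n)"
    using theta_pos by simp
  ultimately show ?thesis by (auto simp: shifted_gram_def)
qed

lemma card_positive_score: "2 * card {x \<in> {..<n}. 0 < score x} = n"
proof -
  let ?P = "{x \<in> {..<n}. 0 < score x}"
  have P: "{..<n} \<inter> {x. 0 < score x} = ?P" and Q: "{..<n} \<inter> - {x. 0 < score x} = {..<n} - ?P"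
    by auto
  have "0 = (\<Sum>x<n. score x)" using sum_score by simp
  also have "\<dots> = (\<Sum>x<n. if 0 < score x then \<theta> else - \<theta>)"
    by (intro sum.cong refl) (metis lessThan_iff score_eq_theta score_eq_minus_theta)
  also have "\<dots> = \<theta> * real (card ?P) - \<theta> * real (card ({..<n} - ?P))"
    by (simp add: sum.If_cases P Q)
  also have "card ({..<n} - ?P) = n - card ?P"
    by (subst card_Diff_subset) auto
  finally show ?thesis using theta_pos card_mono[of "{..<n}" ?P] by auto
qed

lemma odd_card_positive_score:
  assumes "n > 0"
  shows "odd (card {x \<in> {..<n}. 0 < score x})"
proof -
  let ?P = "{x \<in> {..<n}. 0 < score x}"
  have "?P \<noteq> {}"
    using card_positive_score assms by (metis card.empty mult_0_right less_irrefl)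
  then obtain x where x: "x \<in> ?P" by blast
  then have "x < n" "0 < score x" by auto
  then have score_x: "score x = \<theta>" by (rule score_eq_theta)
  have shift: "\<theta> + score y = (if 0 < score y then 2 * \<theta> else 0)" if "y < n" for y
    using score_eq_theta[OF that] score_eq_minus_theta[OF that] by auto
  have "(\<Sum>y<n. T x y * (\<theta> + score y)) = \<theta> * score x + (\<Sum>y<n. T x y * score y)"
    by (simp add: distrib_left sum.distrib score_def[of x] sum_distrib_left mult.commute)
  also have "\<dots> = 0"
    using sum_T_mult_score[of x] row_sum[OF \<open>x < n\<close>] score_x by (simp add: power2_eq_square)
  finally have "0 = (\<Sum>y<n. T x y * (\<theta> + score y))" ..
  also have "\<dots> = (\<Sum>y<n. if 0 < score y then 2 * \<theta> * T x y else 0)"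
    by (intro sum.cong refl) (auto simp: shift)
  also have "\<dots> = (\<Sum>y\<in>?P. 2 * \<theta> * T x y)"
    by (rule sum.inter_filter[symmetric]) simp
  also have "\<dots> = 2 * \<theta> * (\<Sum>y\<in>?P. T x y)"
    by (simp add: sum_distrib_left)
  finally have "(\<Sum>y\<in>?P - {x}. T x y) = 0"
    using theta_pos diag_eq_0[OF \<open>x < n\<close>] x by (simp add: sum_diff1)
  then have "even (card (?P - {x}))"
    by (rule even_card_if_sum_signs_eq_0[rotated 2]) (use off_diag[OF \<open>x < n\<close>] in auto)
  moreover have "card ?P = Suc (card (?P - {x}))"
    by (rule card_Suc_Diff1[symmetric]) (use x in auto)
  ultimately show ?thesis by (metis even_Suc)
qed


lemma gram_block_form:
  assumes "4 \<le> n"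
  obtains k l :: nat where "0 < k" "0 < l"
    "\<And>x z. x < n \<Longrightarrow> z < n \<Longrightarrow> gram x z
      = (if (0 < score x) = (0 < score z) then (if x = z then real k else 0) + real l else 0)"
proof -
  let ?P = "{x \<in> {..<n}. 0 < score x}"
  have "2 \<le> card ?P" using card_positive_score assms by linarith
  then obtain x0 z0 where x0: "x0 \<in> ?P" and z0: "z0 \<in> ?P" and "x0 \<noteq> z0"
    by (metis (no_types, lifting) card_le_Suc_iff numeral_2_eq_2 insertCI)
  then have "x0 < n" "z0 < n" by auto
  have l: "gram x0 z0 = 2 * gap / real n"
    using gram_eq_sign_classes[OF \<open>x0 < n\<close> \<open>z0 < n\<close>] x0 z0 \<open>x0 \<noteq> z0\<close> by simp
  have k: "gram x0 x0 - gram x0 z0 = \<phi>\<^sup>2"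
    using gram_eq_sign_classes[OF \<open>x0 < n\<close> \<open>x0 < n\<close>] l by simp
  have "gram x0 z0 \<in> \<int>" "0 < gram x0 z0"
    using gram_in_Ints[OF \<open>x0 < n\<close> \<open>z0 < n\<close>] gap_pos assms l by auto
  then obtain l' where l': "gram x0 z0 = real l'" "0 < l'"
    by (rule Ints_pos_obtain_nat)
  have "gram x0 x0 - gram x0 z0 \<in> \<int>" "0 < gram x0 x0 - gram x0 z0"
    using Ints_diff[OF gram_in_Ints[OF \<open>x0 < n\<close> \<open>x0 < n\<close>] gram_in_Ints[OF \<open>x0 < n\<close> \<open>z0 < n\<close>]]
      phi_pos k by auto
  then obtain k' where k': "gram x0 x0 - gram x0 z0 = real k'" "0 < k'"
    by (rule Ints_pos_obtain_nat)
  show ?thesis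
  proof (rule that[OF k'(2) l'(2)])
    fix x z assume "x < n" "z < n"
    then show "gram x z
        = (if (0 < score x) = (0 < score z) then (if x = z then real k' else 0) + real l' else 0)"
      using gram_eq_sign_classes[of x z] k k' l l' by auto
  qed
qed
end

end

section \<open>The main angle of \<open>-\<phi>\<close>\<close>

lemma sum_cmod_sq_eq_0:
  fixes f :: "nat \<Rightarrow> complex"
  assumes "(\<Sum>k<m. (cmod (f k))\<^sup>2) = 0" "k < m"
  shows "f k = 0"
  using assms by (subst (asm) sum_nonneg_eq_0_iff) auto

lemma cinner_self: "cinner v v = complex_of_real (\<Sum>k<dim_vec v. (cmod (v $ k))\<^sup>2)"
  unfolding cinner_def of_real_sum by (intro sum.cong refl) (rule complex_norm_square[symmetric])

lemma eigenspace_diff: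
  assumes S: "S \<in> carrier_mat n n" and "v \<in> eigenspace S t" "w \<in> eigenspace S t"
  shows "v - w \<in> eigenspace S t"
proof -
  have v: "v \<in> carrier_vec n" "S *\<^sub>v v = complex_of_real t \<cdot>\<^sub>v v"
    and w: "w \<in> carrier_vec n" "S *\<^sub>v w = complex_of_real t \<cdot>\<^sub>v w"
    using assms S unfolding eigenspace_def by auto
  have "S *\<^sub>v (v - w) = complex_of_real t \<cdot>\<^sub>v (v - w)"
    unfolding mult_minus_distrib_mat_vec[OF S v(1) w(1)] v(2) w(2)
    by (rule eq_vecI) (use v w in \<open>auto simp: algebra_simps\<close>)
  then show ?thesis using v w S unfolding eigenspace_def by simp
qed

lemma eig_proj_eqI:
  assumes S: "S \<in> carrier_mat n n" and x: "x \<in> carrier_vec n" and w: "w \<in> eigenspace S t"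
    and orth: "\<And>u. u \<in> eigenspace S t \<Longrightarrow> cinner (x - w) u = 0"
  shows "eig_proj S t x = w"
  unfolding eig_proj_def
proof (rule the_equality)
  show "w \<in> eigenspace S t \<and> (\<forall>u\<in>eigenspace S t. cinner (x - w) u = 0)" using w orth by blast
next
  fix w' assume w': "w' \<in> eigenspace S t \<and> (\<forall>u\<in>eigenspace S t. cinner (x - w') u = 0)"
  have wc: "w \<in> carrier_vec n" and w'c: "w' \<in> carrier_vec n"
    using w w' S unfolding eigenspace_def by auto
  have "cinner (x - w') (w - w') - cinner (x - w) (w - w') = 0"
    using w' orth eigenspace_diff[OF S w] by simp
  moreover have "cinner (x - w') (w - w') - cinner (x - w) (w - w') = cinner (w - w') (w - w')"
    unfolding cinner_def using x wc w'c by (simp add: sum_subtractf[symmetric] algebra_simps)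
  ultimately have "complex_of_real (\<Sum>k<dim_vec (w - w'). (cmod ((w - w') $ k))\<^sup>2) = 0"
    by (simp only: cinner_self[symmetric])
  then have "(\<Sum>k<n. (cmod ((w - w') $ k))\<^sup>2) = 0"
    using w'c by (simp only: of_real_eq_0_iff index_minus_vec carrier_vecD)
  then show "w' = w"
    using sum_cmod_sq_eq_0 wc w'c by (intro eq_vecI) (auto, metis right_minus_eq)
qed

locale seidel_two_eigenvalues = gram_two_eigenvalues + seidel_matrix
begin

definition row_defect :: "nat \<Rightarrow> real" where
  "row_defect x = (\<Sum>z<n. gram x z) - \<theta>\<^sup>2"

lemma gram_mult_row_defect: "x < n \<Longrightarrow> (\<Sum>y<n. gram x y * row_defect y) = \<phi>\<^sup>2 * row_defect x"
proof -
  assume x: "x < n"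
  have "row_defect y = (\<Sum>z<n. shifted_gram (\<theta>\<^sup>2) y z)" if "y < n" for y
    using that by (simp add: shifted_gram_def row_defect_def sum_subtractf)
  then have "(\<Sum>y<n. shifted_gram (\<phi>\<^sup>2) x y * row_defect y)
      = (\<Sum>y<n. \<Sum>z<n. shifted_gram (\<phi>\<^sup>2) x y * shifted_gram (\<theta>\<^sup>2) y z)"
    by (simp add: sum_distrib_left)
  also have "\<dots> = (\<Sum>z<n. \<Sum>y<n. shifted_gram (\<phi>\<^sup>2) x y * shifted_gram (\<theta>\<^sup>2) y z)"
    by (rule sum.swap)
  finally have "0 = (\<Sum>y<n. shifted_gram (\<phi>\<^sup>2) x y * row_defect y)"
    using annihilate[OF x] by simp
  also have "\<dots> = (\<Sum>y<n. gram x y * row_defect y) - \<phi>\<^sup>2 * row_defect x"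
    using x by (rule sum_shifted_gram_mult)
  finally show ?thesis by simp
qed

definition skew_defect :: "nat \<Rightarrow> real" where
  "skew_defect x = (\<Sum>y<n. T x y * row_defect y)"

lemma T_mult_skew_defect: "x < n \<Longrightarrow> (\<Sum>y<n. T x y * skew_defect y) = - \<phi>\<^sup>2 * row_defect x"
  using sum_gram_mult[of x row_defect] gram_mult_row_defect[of x] by (simp add: skew_defect_def)

lemma T_mult_cnj_eigenvector:
  assumes u: "u \<in> eigenspace S (- \<phi>)" and x: "x < n"
  shows "(\<Sum>y<n. complex_of_real (T x y) * cnj (u $ y)) = - \<i> * \<phi> * cnj (u $ x)"
proof -
  have uc: "u \<in> carrier_vec n" and ue: "S *\<^sub>v u = complex_of_real (- \<phi>) \<cdot>\<^sub>v u"
    using u S_carrier unfolding eigenspace_def by auto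
  have "\<i> * (\<Sum>y<n. complex_of_real (T x y) * u $ y) = (S *\<^sub>v u) $ x"
    by (simp add: index_mult_mat_vec_sum[OF S_carrier uc x] S_entry x sum_distrib_left mult.assoc)
  also have "\<dots> = - \<phi> * u $ x" using ue uc x by simp
  finally have "- \<i> * (\<i> * (\<Sum>y<n. complex_of_real (T x y) * u $ y)) = - \<i> * (- \<phi> * u $ x)"
    by simp
  then have "(\<Sum>y<n. complex_of_real (T x y) * u $ y) = \<i> * \<phi> * u $ x"
    by (simp add: algebra_simps)
  then have "cnj (\<Sum>y<n. complex_of_real (T x y) * u $ y) = cnj (\<i> * \<phi> * u $ x)" by simp
  then show ?thesis by simp
qed

lemma gram_mult_cnj_eigenvector:
  assumes u: "u \<in> eigenspace S (- \<phi>)" and x: "x < n"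
  shows "(\<Sum>y<n. complex_of_real (gram x y) * cnj (u $ y)) = \<phi>\<^sup>2 * cnj (u $ x)"
proof -
  have "(\<Sum>y<n. complex_of_real (gram x y) * cnj (u $ y))
      = (\<Sum>y<n. \<Sum>k<n. - (complex_of_real (T x k) * (complex_of_real (T k y) * cnj (u $ y))))"
  proof (intro sum.cong refl)
    fix y assume "y \<in> {..<n}"
    then have "gram x y = - (\<Sum>k<n. T x k * T k y)" by (simp add: sum_T_mult_T)
    then have "complex_of_real (gram x y) = - (\<Sum>k<n. complex_of_real (T x k) * complex_of_real (T k y))"
      by simp
    then show "complex_of_real (gram x y) * cnj (u $ y)
        = (\<Sum>k<n. - (complex_of_real (T x k) * (complex_of_real (T k y) * cnj (u $ y))))"
      by (simp add: sum_distrib_right sum_negf mult.assoc)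
  qed
  also have "\<dots> = (\<Sum>k<n. - (complex_of_real (T x k) * (\<Sum>y<n. complex_of_real (T k y) * cnj (u $ y))))"
    by (subst sum.swap) (simp add: sum_distrib_left sum_negf)
  also have "\<dots> = (\<Sum>k<n. \<i> * \<phi> * (complex_of_real (T x k) * cnj (u $ k)))"
    by (intro sum.cong refl) (simp add: T_mult_cnj_eigenvector[OF u])
  also have "\<dots> = \<i> * \<phi> * (\<Sum>k<n. complex_of_real (T x k) * cnj (u $ k))"
    by (simp add: sum_distrib_left)
  also have "\<dots> = \<phi>\<^sup>2 * cnj (u $ x)"
    unfolding T_mult_cnj_eigenvector[OF u x] by (simp add: algebra_simps power2_eq_square)
  finally show ?thesis .
qed

text \<open>
  The \<open>\<phi>\<^sup>2\<close>-component of \<open>j\<close> for \<open>S\<^sup>2\<close> is \<open>-w/gap\<close>, where \<open>w\<close> is the row defect, and on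
  that eigenspace the projection onto the \<open>-\<phi>\<close>-eigenspace of \<open>S\<close> is \<open>(\<phi> - S)/(2\<phi>)\<close>.
\<close>

definition ones_projection :: "complex vec" where
  "ones_projection = vec n (\<lambda>x. complex_of_real (1 / (2 * \<phi> * gap))
     * (\<i> * complex_of_real (skew_defect x) - complex_of_real (\<phi> * row_defect x)))"

lemma ones_projection_carrier: "ones_projection \<in> carrier_vec n"
  unfolding ones_projection_def by simp

lemma ones_projection_eigenspace: "ones_projection \<in> eigenspace S (- \<phi>)"
proof -
  let ?c = "complex_of_real (1 / (2 * \<phi> * gap))"
  have "(S *\<^sub>v ones_projection) $ x = complex_of_real (- \<phi>) * ones_projection $ x" if x: "x < n" for x
  proof -
    have "(S *\<^sub>v ones_projection) $ x = (\<Sum>y<n. S $$ (x, y) * ones_projection $ y)"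
      by (rule index_mult_mat_vec_sum[OF S_carrier ones_projection_carrier x])
    also have "\<dots> = (\<Sum>y<n. - ?c * complex_of_real (T x y * skew_defect y)
        + (- \<i> * \<phi> * ?c) * complex_of_real (T x y * row_defect y))"
      by (intro sum.cong refl) (simp add: S_entry x ones_projection_def algebra_simps)
    also have "\<dots> = - ?c * complex_of_real (\<Sum>y<n. T x y * skew_defect y)
        + (- \<i> * \<phi> * ?c) * complex_of_real (skew_defect x)"
      by (simp only: sum.distrib sum_distrib_left[symmetric] of_real_sum[symmetric]
          skew_defect_def[of x, symmetric])
    also have "\<dots> = complex_of_real (- \<phi>) * ones_projection $ x"
      using x by (simp add: T_mult_skew_defect ones_projection_def algebra_simps power2_eq_square)
    finally show ?thesis .
  qed
  then show ?thesis
    using S_carrier ones_projection_carrier unfolding eigenspace_def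
    by (auto intro!: eq_vecI)
qed

lemma row_defect_inner_eigenvector:
  assumes u: "u \<in> eigenspace S (- \<phi>)"
  shows "(\<Sum>y<n. complex_of_real (row_defect y) * cnj (u $ y)) = - gap * (\<Sum>y<n. cnj (u $ y))"
proof -
  have "(\<Sum>y<n. \<Sum>z<n. complex_of_real (gram y z) * cnj (u $ y))
      = (\<Sum>z<n. \<Sum>y<n. complex_of_real (gram z y) * cnj (u $ y))"
    by (subst sum.swap) (simp add: gram_commute)
  also have "\<dots> = (\<Sum>z<n. \<phi>\<^sup>2 * cnj (u $ z))"
    by (intro sum.cong refl) (simp add: gram_mult_cnj_eigenvector[OF u])
  finally show ?thesis
    unfolding row_defect_def gap_def
    by (simp add: algebra_simps sum_distrib_left sum_distrib_right sum_subtractf)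
qed

lemma skew_defect_inner_eigenvector:
  assumes u: "u \<in> eigenspace S (- \<phi>)"
  shows "(\<Sum>k<n. complex_of_real (skew_defect k) * cnj (u $ k))
    = \<i> * \<phi> * (\<Sum>y<n. complex_of_real (row_defect y) * cnj (u $ y))"
proof -
  have "(\<Sum>k<n. complex_of_real (skew_defect k) * cnj (u $ k))
      = (\<Sum>k<n. \<Sum>y<n. complex_of_real (row_defect y) * (complex_of_real (T k y) * cnj (u $ k)))"
    unfolding skew_defect_def of_real_sum sum_distrib_right
    by (intro sum.cong refl) (simp add: algebra_simps)
  also have "\<dots> = (\<Sum>y<n. \<Sum>k<n. complex_of_real (row_defect y)
      * - (complex_of_real (T y k) * cnj (u $ k)))"
    apply (subst sum.swap)
    apply (intro sum.cong refl)
    subgoal for y k using skew[of y k] by simp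
    done
  also have "\<dots> = (\<Sum>y<n. complex_of_real (row_defect y)
      * - (\<Sum>k<n. complex_of_real (T y k) * cnj (u $ k)))"
    by (simp add: sum_distrib_left sum_negf)
  also have "\<dots> = (\<Sum>y<n. complex_of_real (row_defect y) * (\<i> * \<phi> * cnj (u $ y)))"
    by (intro sum.cong refl) (simp add: T_mult_cnj_eigenvector[OF u])
  also have "\<dots> = \<i> * \<phi> * (\<Sum>y<n. complex_of_real (row_defect y) * cnj (u $ y))"
    by (simp add: sum_distrib_left algebra_simps)
  finally show ?thesis .
qed

lemma ones_minus_projection_orthogonal:
  assumes u: "u \<in> eigenspace S (- \<phi>)"
  shows "cinner (vec n (\<lambda>_. 1) - ones_projection) u = 0"
proof -
  let ?c = "complex_of_real (1 / (2 * \<phi> * gap))"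
  have "(\<Sum>k<n. ones_projection $ k * cnj (u $ k))
      = (\<Sum>k<n. ?c * \<i> * (complex_of_real (skew_defect k) * cnj (u $ k))
          - ?c * \<phi> * (complex_of_real (row_defect k) * cnj (u $ k)))"
    by (intro sum.cong refl) (simp add: ones_projection_def algebra_simps)
  also have "\<dots> = ?c * (\<i> * (\<Sum>k<n. complex_of_real (skew_defect k) * cnj (u $ k))
          - \<phi> * (\<Sum>k<n. complex_of_real (row_defect k) * cnj (u $ k)))"
    by (simp only: sum_subtractf sum_distrib_left[symmetric] right_diff_distrib mult.assoc)
  also have "\<dots> = complex_of_real (2 * (1 / (2 * \<phi> * gap)) * \<phi> * gap) * (\<Sum>k<n. cnj (u $ k))"
    unfolding skew_defect_inner_eigenvector[OF u] row_defect_inner_eigenvector[OF u]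
    by (simp add: algebra_simps)
  also have "2 * (1 / (2 * \<phi> * gap)) * \<phi> * gap = 1"
    using phi_pos gap_pos by simp
  finally show ?thesis
    unfolding cinner_def using ones_projection_carrier by (simp add: left_diff_distrib sum_subtractf)
qed

lemma eig_proj_ones: "eig_proj S (- \<phi>) (vec n (\<lambda>_. 1)) = ones_projection"
  by (rule eig_proj_eqI[OF S_carrier _ ones_projection_eigenspace ones_minus_projection_orthogonal])
    auto

theorem row_sum_gram_if_main_angle_eq_0:
  assumes "main_angle S (- \<phi>) = 0" and x: "x < n"
  shows "(\<Sum>z<n. gram x z) = \<theta>\<^sup>2"
proof -
  have "cnorm ones_projection = 0"
    using assms S_carrier by (simp add: main_angle_def eig_proj_ones)
  then have "(\<Sum>k<n. (cmod (ones_projection $ k))\<^sup>2) = 0"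
    using ones_projection_carrier by (simp add: cnorm_def)
  then have "ones_projection $ x = 0"
    by (rule sum_cmod_sq_eq_0[OF _ x])
  then have "Re (ones_projection $ x) = 0" by simp
  then have "row_defect x = 0"
    using phi_pos gap_pos x by (simp add: ones_projection_def)
  then show ?thesis by (simp add: row_defect_def)
qed

end

section \<open>The block structure of \<open>S\<^sup>2\<close>\<close>

lemma index_perm_mat_conj:
  fixes M :: "'a::comm_ring_1 mat"
  assumes p: "p permutes {..<n}" and M: "M \<in> carrier_mat n n" and i: "i < n" and j: "j < n"
  shows "(perm_mat n p * M * transpose_mat (perm_mat n p)) $$ (i, j) = M $$ (p i, p j)"
proof -
  have pn: "p x < n" if "x < n" for x using permutes_in_image[OF p] that by simp
  have P: "perm_mat n p \<in> carrier_mat n n" unfolding perm_mat_def by simp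
  have PM: "(perm_mat n p * M) $$ (a, k) = M $$ (p a, k)" if a: "a < n" and k: "k < n" for a k
  proof -
    have "(perm_mat n p * M) $$ (a, k) = (\<Sum>l<n. perm_mat n p $$ (a, l) * M $$ (l, k))"
      by (rule index_mult_mat_sum[OF P M a k])
    also have "\<dots> = (\<Sum>l<n. if l = p a then M $$ (p a, k) else 0)"
      by (intro sum.cong refl) (auto simp: perm_mat_def a)
    finally show ?thesis using pn[OF a] by simp
  qed
  have PT: "transpose_mat (perm_mat n p) $$ (k, j) = (if p j = k then 1 else 0)" if "k < n" for k
    using that j by (simp add: perm_mat_def)
  have "(perm_mat n p * M * transpose_mat (perm_mat n p)) $$ (i, j)
      = (\<Sum>k<n. (perm_mat n p * M) $$ (i, k) * transpose_mat (perm_mat n p) $$ (k, j))"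
    by (rule index_mult_mat_sum[of _ n n _ n]) (use P M i j in \<open>auto intro: mult_carrier_mat\<close>)
  also have "\<dots> = (\<Sum>k<n. if k = p j then M $$ (p i, p j) else 0)"
    using i by (intro sum.cong refl) (auto simp: PM PT)
  finally show ?thesis using pn[OF j] by simp
qed

lemma permutes_classes_to_halves:
  assumes card: "card {x \<in> {..<2 * d}. s x} = d"
  obtains p where "p permutes {..<2 * d}" "\<And>x. x < 2 * d \<Longrightarrow> p x < d \<longleftrightarrow> s x"
proof -
  let ?n = "2 * d"
  let ?P = "{x \<in> {..<?n}. s x}" and ?Q = "{x \<in> {..<?n}. \<not> s x}"
  have PQ: "?P \<union> ?Q = {..<?n}" "?P \<inter> ?Q = {}" by auto
  then have "card ?P + card ?Q = ?n"
    using card_Un_disjoint[of ?P ?Q] by simp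
  then have cardQ: "card ?Q = d" using card by simp
  obtain f where f: "bij_betw f ?P {..<d}"
    using finite_same_card_bij[of ?P "{..<d}"] card by auto
  obtain g where g: "bij_betw g ?Q {d..<?n}"
    using finite_same_card_bij[of ?Q "{d..<?n}"] cardQ by auto
  define p where "p x = (if x < ?n then (if s x then f x else g x) else x)" for x
  have bP: "bij_betw p ?P {..<d}" using f by (subst bij_betw_cong[of ?P p f]) (auto simp: p_def)
  have bQ: "bij_betw p ?Q {d..<?n}" using g by (subst bij_betw_cong[of ?Q p g]) (auto simp: p_def)
  have "bij_betw p (?P \<union> ?Q) ({..<d} \<union> {d..<?n})" by (rule bij_betw_combine[OF bP bQ]) auto
  moreover have "{..<d} \<union> {d..<?n} = {..<?n}" by auto
  ultimately have "bij_betw p {..<?n} {..<?n}" using PQ by simp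
  then have "p permutes {..<?n}" by (rule bij_imp_permutes) (auto simp: p_def)
  moreover have "p x < d \<longleftrightarrow> s x" if "x < ?n" for x
    using that bij_betwE[OF bP] bij_betwE[OF bQ] by (cases "s x") auto
  ultimately show ?thesis using that by blast
qed

lemma perm_similar_block_kIlJ:
  fixes M :: "'a::comm_ring_1 mat"
  assumes card: "card {x \<in> {..<2 * d}. s x} = d" and M: "M \<in> carrier_mat (2 * d) (2 * d)"
    and M_entry: "\<And>x z. x < 2 * d \<Longrightarrow> z < 2 * d \<Longrightarrow>
      M $$ (x, z) = (if s x = s z then (if x = z then k else 0) + l else 0)"
  shows "perm_similar (2 * d) (block_kIlJ d k l) M"
proof -
  let ?n = "2 * d"
  obtain p where pp: "p permutes {..<?n}" and ps: "\<And>x. x < ?n \<Longrightarrow> p x < d \<longleftrightarrow> s x"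
    using permutes_classes_to_halves[OF card] by blast
  have pinj: "p x = p z \<longleftrightarrow> x = z" for x z
    using permutes_inj[OF pp] unfolding inj_def by auto
  have pn: "p x < ?n" if "x < ?n" for x using permutes_in_image[OF pp] that by simp
  have B: "block_kIlJ d k l \<in> carrier_mat ?n ?n" unfolding block_kIlJ_def by simp
  have "M = perm_mat ?n p * block_kIlJ d k l * transpose_mat (perm_mat ?n p)"
  proof (rule eq_matI)
    fix i j assume "i < dim_row (perm_mat ?n p * block_kIlJ d k l * transpose_mat (perm_mat ?n p))"
      "j < dim_col (perm_mat ?n p * block_kIlJ d k l * transpose_mat (perm_mat ?n p))"
    then have i: "i < ?n" and j: "j < ?n" by (auto simp: perm_mat_def)
    show "M $$ (i, j) = (perm_mat ?n p * block_kIlJ d k l * transpose_mat (perm_mat ?n p)) $$ (i, j)"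
      unfolding index_perm_mat_conj[OF pp B i j]
      using pn[OF i] pn[OF j] ps[OF i] ps[OF j] pinj[of i j] M_entry[OF i j]
      by (simp add: block_kIlJ_def)
  qed (use M in \<open>auto simp: perm_mat_def\<close>)
  then show ?thesis unfolding perm_similar_def using pp by blast
qed

context seidel_two_eigenvalues
begin

theorem square_perm_similar_block:
  assumes n: "n = 2 * d" and d: "2 \<le> d" and angle: "main_angle S (- \<phi>) = 0"
    and trace: "(\<Sum>x<n. gram x x) = (real n - 2) * \<phi>\<^sup>2 + 2 * \<theta>\<^sup>2"
  shows "odd d \<and> (\<exists>k l :: nat. 0 < k \<and> 0 < l \<and>
    perm_similar n (block_kIlJ d (of_nat k) (of_nat l)) (S * S))"
proof -
  note rows = row_sum_gram_if_main_angle_eq_0[OF angle]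
  have card: "card {x \<in> {..<n}. 0 < score x} = d"
    using card_positive_score[OF rows trace] n by simp
  obtain k l :: nat where kl: "0 < k" "0 < l" and gram: "\<And>x z. x < n \<Longrightarrow> z < n \<Longrightarrow> gram x z
      = (if (0 < score x) = (0 < score z) then (if x = z then real k else 0) + real l else 0)"
    using gram_block_form[OF rows trace] n d by auto
  have "(S * S) $$ (x, z) = (if (0 < score x) = (0 < score z)
      then (if x = z then of_nat k else 0) + of_nat l else 0)" if "x < n" "z < n" for x z
    using gram[OF that] that by (simp add: seidel_square gram_mat_def)
  then have "perm_similar n (block_kIlJ d (of_nat k) (of_nat l)) (S * S)"
    using perm_similar_block_kIlJ[of d "\<lambda>x. 0 < score x" "S * S"] card S_carrier n by auto
  moreover have "odd d" using odd_card_positive_score[OF rows trace] card n d by simp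
  ultimately show ?thesis using kl by blast
qed

end

lemma seidel_matrix_of_tournament:
  assumes "tournament_adj n A"
  shows "seidel_matrix n (\<lambda>x y. real_of_int (A $$ (x, y) - A $$ (y, x))) (seidel A)"
proof unfold_locales
  have A: "A \<in> carrier_mat n n" using assms unfolding tournament_adj_def by blast
  have "A - transpose_mat A \<in> carrier_mat n n" by (rule minus_carrier_mat) (use A in simp)
  then show "seidel A \<in> carrier_mat n n" unfolding seidel_def by simp
  fix x y assume "x < n" "y < n"
  then show "seidel A $$ (x, y) = \<i> * complex_of_real (real_of_int (A $$ (x, y) - A $$ (y, x)))"
    using A unfolding seidel_def by simp
  assume "x \<noteq> y"
  then have "(A $$ (x, y) = 1 \<and> A $$ (y, x) = 0) \<or> (A $$ (x, y) = 0 \<and> A $$ (y, x) = 1)"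
    using assms \<open>x < n\<close> \<open>y < n\<close> unfolding tournament_adj_def by blast
  then show "real_of_int (A $$ (x, y) - A $$ (y, x)) = 1
      \<or> real_of_int (A $$ (x, y) - A $$ (y, x)) = - 1"
    by auto
qed simp

theorem lemma4p5:
  fixes d :: nat and A :: "int mat" and \<theta> \<phi> :: real
  assumes "d \<ge> 2"
    and "type3 (2*d) A"
    and "0 < \<phi>" and "\<phi> < \<theta>"
    and "char_poly (seidel A) =
           [:complex_of_real \<theta>, 1:] * [:complex_of_real \<phi>, 1:] ^ (d - 1)
           * [:- complex_of_real \<phi>, 1:] ^ (d - 1) * [:- complex_of_real \<theta>, 1:]"
  shows "odd d \<and> (\<exists>k l :: nat. k > 0 \<and> l > 0 \<and>
           perm_similar (2*d) (block_kIlJ d (of_nat k) (of_nat l)) (seidel A * seidel A))"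
proof -
  let ?T = "\<lambda>x y. real_of_int (A $$ (x, y) - A $$ (y, x))"
  note type3 = assms(2)[unfolded type3_def Let_def]
  interpret seidel_matrix "2 * d" ?T "seidel A"
    using seidel_matrix_of_tournament type3 by blast
  have "distinct_eigs (seidel A) = [- \<theta>, - \<phi>, \<phi>, \<theta>]"
    by (rule distinct_eigs_of_char_poly[OF S_carrier assms(3,4,1,5)])
  then have angle: "main_angle (seidel A) (- \<phi>) = 0"
    using type3 by simp
  interpret seidel_two_eigenvalues "2 * d" ?T \<phi> \<theta> "seidel A"
    by unfold_locales (use assms(3,4) sum_shifted_grams_eq_0[OF assms(1,5)] in auto)
  have "(\<Sum>x<2 * d. gram x x) = (real (2 * d) - 2) * \<phi>\<^sup>2 + 2 * \<theta>\<^sup>2"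
    using trace_gram_of_char_poly[OF assms(5)] assms(1) by (simp add: of_nat_diff)
  then show ?thesis
    using square_perm_similar_block[OF refl assms(1) angle] by simp
qed

end
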